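(* Let $S$ be a non-abelian finite simple group with universal covering group $\widetilde{S}$, and let $\chi$ be a non-principal irreducible character of $\widetilde{S}$. Then $S$ has a non-principal irreducible character of degree at most $\chi(1)^2-1$.
   Context: The universal covering group $\widetilde{S}$ of a non-abelian finite simple group $S$ is its Schur cover: the perfect central extension of $S$ by its Schur multiplier. *)

theory Defs
  imports "HOL-Algebra.Algebra" "Jordan_Normal_Form.Matrix"
begin

definition is_rep :: "('a, 'm) monoid_scheme \<Rightarrow> nat \<Rightarrow> ('a \<Rightarrow> complex mat) \<Rightarrow> bool" where
  "is_rep G n \<rho> \<longleftrightarrow>
     (\<forall>g\<in>carrier G. \<rho> g \<in> carrier_mat n n) \<and>
     (\<forall>g\<in>carrier G. \<forall>h\<in>carrier G. \<rho> (g \<otimes>\<^bsub>G\<^esub> h) = \<rho> g * \<rho> h) \<and>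
     \<rho> \<one>\<^bsub>G\<^esub> = 1\<^sub>m n"

definition invariant_subspace :: "('a, 'm) monoid_scheme \<Rightarrow> nat \<Rightarrow> ('a \<Rightarrow> complex mat) \<Rightarrow> complex vec set \<Rightarrow> bool" where
  "invariant_subspace G n \<rho> W \<longleftrightarrow>
     W \<subseteq> carrier_vec n \<and> 0\<^sub>v n \<in> W \<and>
     (\<forall>v\<in>W. \<forall>w\<in>W. v + w \<in> W) \<and>
     (\<forall>c. \<forall>v\<in>W. c \<cdot>\<^sub>v v \<in> W) \<and>
     (\<forall>g\<in>carrier G. \<forall>v\<in>W. \<rho> g *\<^sub>v v \<in> W)"

definition is_irr_rep :: "('a, 'm) monoid_scheme \<Rightarrow> nat \<Rightarrow> ('a \<Rightarrow> complex mat) \<Rightarrow> bool" where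
  "is_irr_rep G n \<rho> \<longleftrightarrow> is_rep G n \<rho> \<and> n > 0 \<and>
     (\<forall>W. invariant_subspace G n \<rho> W \<longrightarrow> W = {0\<^sub>v n} \<or> W = carrier_vec n)"

definition rep_character :: "nat \<Rightarrow> ('a \<Rightarrow> complex mat) \<Rightarrow> 'a \<Rightarrow> complex" where
  "rep_character n \<rho> g = (\<Sum>i<n. \<rho> g $$ (i, i))"

definition principal_character :: "('a, 'm) monoid_scheme \<Rightarrow> nat \<Rightarrow> ('a \<Rightarrow> complex mat) \<Rightarrow> bool" where
  "principal_character G n \<rho> \<longleftrightarrow> (\<forall>g\<in>carrier G. rep_character n \<rho> g = 1)"

definition perfect_group :: "('a, 'm) monoid_scheme \<Rightarrow> bool" where
  "perfect_group G \<longleftrightarrow> derived G (carrier G) = carrier G"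

definition group_center :: "('a, 'm) monoid_scheme \<Rightarrow> 'a set" where
  "group_center G = {z \<in> carrier G. \<forall>g\<in>carrier G. z \<otimes>\<^bsub>G\<^esub> g = g \<otimes>\<^bsub>G\<^esub> z}"

definition central_extension :: "('b, 'n) monoid_scheme \<Rightarrow> ('a, 'm) monoid_scheme \<Rightarrow> ('b \<Rightarrow> 'a) \<Rightarrow> bool" where
  "central_extension E G \<pi> \<longleftrightarrow> group E \<and> group G \<and> \<pi> \<in> hom E G \<and>
     \<pi> ` carrier E = carrier G \<and> kernel E G \<pi> \<subseteq> group_center E"

(* Schur cover (universal covering group) of a finite perfect group S:
   a perfect central extension of S of maximal order among all perfect central
   extensions (every such extension is a quotient of the Schur cover).
   Competing extensions range over groups carried by nat, which covers all
   finite groups up to isomorphism. *)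
definition schur_cover :: "('b, 'n) monoid_scheme \<Rightarrow> ('a, 'm) monoid_scheme \<Rightarrow> ('b \<Rightarrow> 'a) \<Rightarrow> bool" where
  "schur_cover Sh S \<pi> \<longleftrightarrow> central_extension Sh S \<pi> \<and> perfect_group Sh \<and> finite (carrier Sh) \<and>
     (\<forall>(E :: nat monoid) (\<psi> :: nat \<Rightarrow> 'a).
        central_extension E S \<psi> \<and> perfect_group E \<and> finite (carrier E)
        \<longrightarrow> card (carrier E) \<le> card (carrier Sh))"

end

(* Let rho be a non-principal irreducible representation of degree n of a perfect central
   extension E of G. Since E is perfect, n >= 2. The centre of E acts by scalars (Schur's lemma),
   so conjugation X |-> rho(g) X rho(g)^-1 on n x n matrices is a representation of G of degree n^2.
   It preserves the traceless matrices, a subspace of dimension n^2 - 1 on which G has no nonzero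
   fixed vector: a fixed matrix commutes with rho, hence is scalar, hence zero. Finally, a
   representation without nonzero fixed vectors has a non-principal irreducible constituent of no
   larger degree: a proper invariant subspace again carries such a representation, so one can
   induct on the degree, and an irreducible one is non-principal since the principal
   representation fixes a vector. *)

theory Submission
  imports Defs "Jordan_Normal_Form.Schur_Decomposition" "Jordan_Normal_Form.Spectral_Radius"
begin

section \<open>Subrepresentations and irreducible constituents\<close>

lemma eq_mat_on_vecI:
  fixes A C :: "'a::comm_ring_1 mat"
  assumes A: "A \<in> carrier_mat m k" and C: "C \<in> carrier_mat m k"
    and eq: "\<And>x. x \<in> carrier_vec k \<Longrightarrow> A *\<^sub>v x = C *\<^sub>v x"
  shows "A = C"
proof (rule eq_matI)
  fix i j assume i: "i < dim_row C" and j: "j < dim_col C"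
  have "(A *\<^sub>v unit_vec k j) $ i = (C *\<^sub>v unit_vec k j) $ i" using eq[of "unit_vec k j"] by simp
  then show "A $$ (i, j) = C $$ (i, j)" using A C i j by simp
qed (use A C in auto)

lemma rep_carrier: "is_rep G n \<rho> \<Longrightarrow> g \<in> carrier G \<Longrightarrow> \<rho> g \<in> carrier_mat n n"
  unfolding is_rep_def by blast

lemma rep_mult:
  "is_rep G n \<rho> \<Longrightarrow> g \<in> carrier G \<Longrightarrow> h \<in> carrier G \<Longrightarrow> \<rho> (g \<otimes>\<^bsub>G\<^esub> h) = \<rho> g * \<rho> h"
  unfolding is_rep_def by blast

lemma rep_one: "is_rep G n \<rho> \<Longrightarrow> \<rho> \<one>\<^bsub>G\<^esub> = 1\<^sub>m n"
  unfolding is_rep_def by blast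

lemma (in group) rep_inv_mult: "is_rep G n \<rho> \<Longrightarrow> g \<in> carrier G \<Longrightarrow> \<rho> (inv g) * \<rho> g = 1\<^sub>m n"
  by (metis inv_closed l_inv rep_mult rep_one)

lemma (in group) rep_mult_inv: "is_rep G n \<rho> \<Longrightarrow> g \<in> carrier G \<Longrightarrow> \<rho> g * \<rho> (inv g) = 1\<^sub>m n"
  by (metis inv_closed r_inv rep_mult rep_one)

definition fixed_vectors :: "('a, 'm) monoid_scheme \<Rightarrow> nat \<Rightarrow> ('a \<Rightarrow> complex mat) \<Rightarrow> complex vec set"
  where "fixed_vectors G n \<sigma> = {v \<in> carrier_vec n. \<forall>g\<in>carrier G. \<sigma> g *\<^sub>v v = v}"

lemma not_principal_if_no_fixed_vectors:
  assumes "group G" and rep: "is_rep G k \<sigma>" and "0 < k"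
    and no_fixed: "fixed_vectors G k \<sigma> \<subseteq> {0\<^sub>v k}"
  shows "\<not> principal_character G k \<sigma>"
proof
  assume principal: "principal_character G k \<sigma>"
  have "of_nat k = rep_character k \<sigma> \<one>\<^bsub>G\<^esub>"
    using rep_one[OF rep] by (simp add: rep_character_def)
  also have "\<dots> = 1"
    using principal \<open>group G\<close> by (simp add: principal_character_def group.is_monoid)
  finally have k: "k = 1" by simp
  have "unit_vec 1 0 \<in> fixed_vectors G k \<sigma>"
  proof -
    have "\<sigma> g *\<^sub>v unit_vec 1 0 = unit_vec 1 0" if g: "g \<in> carrier G" for g
    proof -
      have "\<sigma> g $$ (0, 0) = 1"
        using principal g k by (simp add: principal_character_def rep_character_def)
      then show ?thesis
        using rep_carrier[OF rep g] k by (auto intro!: eq_vecI simp: scalar_prod_def)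
    qed
    then show ?thesis using k by (simp add: fixed_vectors_def)
  qed
  then have "unit_vec 1 0 = (0\<^sub>v 1 :: complex vec)" using no_fixed k by auto
  then have "unit_vec 1 0 $ 0 = (0\<^sub>v 1 :: complex vec) $ 0" by simp
  then show False by simp
qed

lemma irr_rep_commuting_mat_scalar:
  assumes irr: "is_irr_rep G n \<rho>" and M: "M \<in> carrier_mat n n"
    and comm: "\<And>g. g \<in> carrier G \<Longrightarrow> M * \<rho> g = \<rho> g * M"
  obtains c where "M = c \<cdot>\<^sub>m 1\<^sub>m n"
proof -
  have "0 < n" and rep: "is_rep G n \<rho>" using irr unfolding is_irr_rep_def by auto
  then obtain c v where ev: "eigenvector M v c"
    using spectrum_non_empty[OF M] unfolding spectrum_def eigenvalue_def by auto
  define E where "E = {w \<in> carrier_vec n. M *\<^sub>v w = c \<cdot>\<^sub>v w}"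
  have "invariant_subspace G n \<rho> E"
    unfolding invariant_subspace_def
  proof (intro conjI ballI allI)
    fix g w assume g: "g \<in> carrier G" and w: "w \<in> E"
    have "M *\<^sub>v (\<rho> g *\<^sub>v w) = \<rho> g *\<^sub>v (M *\<^sub>v w)"
      using M rep_carrier[OF rep g] w comm[OF g] E_def
      by (metis (no_types, lifting) assoc_mult_mat_vec mem_Collect_eq)
    then show "\<rho> g *\<^sub>v w \<in> E"
      using rep_carrier[OF rep g] w by (auto simp: E_def mult_mat_vec)
  qed (use M in \<open>auto simp: E_def mult_add_distrib_mat_vec smult_add_distrib_vec mult_mat_vec
         smult_smult_assoc mult.commute\<close>)
  moreover have "v \<in> E" "v \<noteq> 0\<^sub>v n" using ev M unfolding eigenvector_def E_def by auto
  ultimately have "E = carrier_vec n" using irr unfolding is_irr_rep_def by blast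
  have "M = c \<cdot>\<^sub>m 1\<^sub>m n"
  proof (rule eq_mat_on_vecI[OF M])
    fix x :: "complex vec" assume x: "x \<in> carrier_vec n"
    then have "M *\<^sub>v x = c \<cdot>\<^sub>v x" using \<open>E = carrier_vec n\<close> by (auto simp: E_def)
    then show "M *\<^sub>v x = (c \<cdot>\<^sub>m 1\<^sub>m n) *\<^sub>v x" using x by auto
  qed auto
  then show thesis ..
qed

lemma invariant_subspace_submodule:
  "invariant_subspace G n \<sigma> W \<Longrightarrow> submodule class_ring W (module_vec TYPE(complex) n)"
  using vec_module[where ?'a = complex and n = n]
  unfolding submodule_def invariant_subspace_def by (auto simp: module_vec_simps class_ring_simps)

lemma (in vec_space) submodule_spanned_by_lin_indpt:
  assumes W: "submodule class_ring W V"
  obtains A where "finite A" "A \<subseteq> W" "lin_indpt A" "span A = W"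
proof -
  have WC: "W \<subseteq> carrier_vec n" using W unfolding submodule_def by auto
  let ?P = "\<lambda>A. A \<subseteq> W \<and> lin_indpt A"
  have "\<exists>A. finite A \<and> maximal A ?P"
  proof (rule maximal_exists)
    show "finite A \<and> card A \<le> n" if "?P A" for A
      using li_le_dim[OF fin_dim, of A] that WC dim_is_n by auto
    show "?P {}" by (auto simp: lin_dep_def)
  qed
  then obtain A where fin: "finite A" and maxA: "maximal A ?P" by blast
  then have AW: "A \<subseteq> W" and li: "lin_indpt A" and max: "\<And>B. A \<subseteq> B \<Longrightarrow> ?P B \<Longrightarrow> B = A"
    unfolding maximal_def by auto
  have AC: "A \<subseteq> carrier_vec n" using AW WC by auto
  have "W \<subseteq> span A"
  proof
    fix w assume w: "w \<in> W"
    show "w \<in> span A"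
    proof (rule ccontr)
      assume nw: "w \<notin> span A"
      then have "w \<notin> A" using in_own_span[OF AC] by auto
      moreover have "lin_indpt (insert w A)"
        using lin_dep_iff_in_span[OF AC li, of w] w WC nw \<open>w \<notin> A\<close> by auto
      ultimately show False using max[of "insert w A"] w AW by auto
    qed
  qed
  moreover have "span A \<subseteq> W" using span_is_subset[OF AW W] .
  ultimately show thesis using that fin AW li by blast
qed

lemma (in cof_vec_space) proper_submodule_coordinates:
  assumes W: "submodule class_ring W V" and ne0: "W \<noteq> {0\<^sub>v n}" and neall: "W \<noteq> carrier_vec n"
  obtains k B L where "0 < k" "k < n" "B \<in> carrier_mat n k" "L \<in> carrier_mat k n" "L * B = 1\<^sub>m k"
    "(\<lambda>x. B *\<^sub>v x) ` carrier_vec k = W"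
proof -
  obtain A where fin: "finite A" and AW: "A \<subseteq> W" and li: "lin_indpt A" and span: "span A = W"
    using submodule_spanned_by_lin_indpt[OF W] .
  have AC: "A \<subseteq> carrier_vec n" using AW W unfolding submodule_def by auto
  obtain bs where bs: "set bs = A" "distinct bs" using finite_distinct_list[OF fin] by blast
  define us where "us = gram_schmidt n bs"
  define k where "k = length us"
  have bsC: "set bs \<subseteq> carrier_vec n" and bs_li: "lin_indpt (set bs)" using bs AC li by auto
  note gs = gram_schmidt_result[OF bsC bs(2) bs_li us_def]
  have us_span: "span (set us) = W" and us_orth: "corthogonal us"
    and usC: "set us \<subseteq> carrier_vec n" and k_card: "k = card A"
    using gs bs span distinct_card[OF bs(2)] unfolding k_def by auto
  have "card A \<le> n" using li_le_dim[OF fin_dim AC li] dim_is_n by simp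
  moreover have "card A \<noteq> n"
  proof
    assume "card A = n"
    then have "basis A" using dim_li_is_basis[OF fin_dim fin AC li] dim_is_n by simp
    then show False using span neall unfolding basis_def by simp
  qed
  moreover have "A \<noteq> {}" using span span_empty ne0 by auto
  ultimately have k: "0 < k" "k < n" using fin k_card by auto
  define B where "B = mat_of_cols n us"
  define L where "L = mat_of_rows n (map vec_inv us)"
  have "L * B = 1\<^sub>m k"
    using corthogonal_inv[OF us_orth usC] unfolding inverts_mat_def B_def L_def k_def by simp
  moreover have "(\<lambda>x. B *\<^sub>v x) ` carrier_vec k = W"
  proof -
    have dims: "\<forall>w\<in>set us. dim_vec w = n" using usC by auto
    have to_lincomb: "B *\<^sub>v x = lincomb_list (\<lambda>i. x $ i) us" if "x \<in> carrier_vec k" for x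
    proof -
      have "vec k (\<lambda>i. x $ i) = x" using that by (auto intro!: eq_vecI)
      then show ?thesis using lincomb_list_as_mat_mult[OF dims] by (simp add: B_def k_def)
    qed
    have of_lincomb: "lincomb_list c us = B *\<^sub>v vec k c" for c
      using lincomb_list_as_mat_mult[OF dims] by (simp add: B_def k_def)
    have "(\<lambda>x. B *\<^sub>v x) ` carrier_vec k = span_list us"
    proof (intro equalityI subsetI)
      fix w assume "w \<in> (\<lambda>x. B *\<^sub>v x) ` carrier_vec k"
      then obtain x where "x \<in> carrier_vec k" "w = B *\<^sub>v x" by blast
      then show "w \<in> span_list us" using to_lincomb by (auto intro: in_span_listI)
    next
      fix w assume "w \<in> span_list us"
      then obtain c where "w = lincomb_list c us" unfolding span_list_def by blast
      then show "w \<in> (\<lambda>x. B *\<^sub>v x) ` carrier_vec k" using of_lincomb by auto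
    qed
    then show ?thesis using span_list_as_span[OF usC] us_span by simp
  qed
  moreover have "B \<in> carrier_mat n k" "L \<in> carrier_mat k n" unfolding B_def L_def k_def by auto
  ultimately show thesis using that k by blast
qed

lemma invariant_subspace_subrep:
  assumes rep: "is_rep G m \<sigma>" and inv: "invariant_subspace G m \<sigma> W"
    and "W \<noteq> {0\<^sub>v m}" and "W \<noteq> carrier_vec m"
  obtains k \<tau> B where "0 < k" "k < m" "is_rep G k \<tau>" "B \<in> carrier_mat m k"
    "(\<lambda>x. B *\<^sub>v x) ` carrier_vec k \<subseteq> W"
    "\<And>x. x \<in> carrier_vec k \<Longrightarrow> B *\<^sub>v x = 0\<^sub>v m \<Longrightarrow> x = 0\<^sub>v k"
    "\<And>g. g \<in> carrier G \<Longrightarrow> \<sigma> g * B = B * \<tau> g"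
proof -
  interpret cof_vec_space m "TYPE(complex)" .
  obtain k B L where k: "0 < k" "k < m" and B: "B \<in> carrier_mat m k" and L: "L \<in> carrier_mat k m"
    and LB: "L * B = 1\<^sub>m k" and image: "(\<lambda>x. B *\<^sub>v x) ` carrier_vec k = W"
    using proper_submodule_coordinates[OF invariant_subspace_submodule[OF inv]] assms(3,4) by blast
  have retract: "B *\<^sub>v (L *\<^sub>v w) = w" if "w \<in> W" for w
  proof -
    obtain x where x: "x \<in> carrier_vec k" and w: "w = B *\<^sub>v x" using image \<open>w \<in> W\<close> by blast
    have "L *\<^sub>v (B *\<^sub>v x) = x" using LB x by (simp add: assoc_mult_mat_vec[OF L B x, symmetric])
    then show ?thesis using w by simp
  qed
  define \<tau> where "\<tau> g = L * \<sigma> g * B" for g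
  have \<sigma>C: "\<sigma> g \<in> carrier_mat m m" if "g \<in> carrier G" for g using rep_carrier[OF rep that] .
  have intertwine: "\<sigma> g * B = B * \<tau> g" if g: "g \<in> carrier G" for g
  proof (rule eq_mat_on_vecI)
    show "\<sigma> g * B \<in> carrier_mat m k" "B * \<tau> g \<in> carrier_mat m k"
      using \<sigma>C[OF g] B L by (auto simp: \<tau>_def)
    fix x :: "complex vec" assume x: "x \<in> carrier_vec k"
    have "\<sigma> g *\<^sub>v (B *\<^sub>v x) \<in> W"
      using inv g image x unfolding invariant_subspace_def by blast
    then have "B *\<^sub>v (L *\<^sub>v (\<sigma> g *\<^sub>v (B *\<^sub>v x))) = \<sigma> g *\<^sub>v (B *\<^sub>v x)"
      using retract by blast
    moreover have "\<tau> g *\<^sub>v x = L *\<^sub>v (\<sigma> g *\<^sub>v (B *\<^sub>v x))"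
      using assoc_mult_mat_vec[OF mult_carrier_mat[OF L \<sigma>C[OF g]] B x]
        assoc_mult_mat_vec[OF L \<sigma>C[OF g]] B x by (simp add: \<tau>_def)
    ultimately show "(\<sigma> g * B) *\<^sub>v x = (B * \<tau> g) *\<^sub>v x"
      using \<sigma>C[OF g] B L x by (simp add: \<tau>_def assoc_mult_mat_vec[OF B _ x])
  qed
  have "is_rep G k \<tau>"
    unfolding is_rep_def
  proof (intro conjI ballI)
    fix g h assume g: "g \<in> carrier G" and h: "h \<in> carrier G"
    note gC = \<sigma>C[OF g] and hC = \<sigma>C[OF h]
    have "\<tau> (g \<otimes>\<^bsub>G\<^esub> h) = L * (\<sigma> g * \<sigma> h) * B"
      by (simp add: \<tau>_def rep_mult[OF rep g h])
    also have "\<dots> = (L * \<sigma> g) * (\<sigma> h * B)"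
      using assoc_mult_mat[OF L mult_carrier_mat[OF gC hC] B] assoc_mult_mat[OF gC hC B]
        assoc_mult_mat[OF L gC mult_carrier_mat[OF hC B]] by simp
    also have "\<dots> = (L * \<sigma> g) * (B * \<tau> h)" by (simp add: intertwine[OF h])
    also have "\<dots> = \<tau> g * \<tau> h"
      using assoc_mult_mat[OF mult_carrier_mat[OF L gC] B, of "\<tau> h" k] hC B L
      by (simp add: \<tau>_def)
    finally show "\<tau> (g \<otimes>\<^bsub>G\<^esub> h) = \<tau> g * \<tau> h" .
  qed (use rep_one[OF rep] LB B L \<sigma>C in \<open>auto simp: \<tau>_def\<close>)
  moreover have "x = 0\<^sub>v k" if x: "x \<in> carrier_vec k" and "B *\<^sub>v x = 0\<^sub>v m" for x
  proof -
    have "x = (L * B) *\<^sub>v x" using LB x by simp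
    also have "\<dots> = L *\<^sub>v (B *\<^sub>v x)" by (rule assoc_mult_mat_vec[OF L B x])
    also have "\<dots> = L *\<^sub>v 0\<^sub>v m" using \<open>B *\<^sub>v x = 0\<^sub>v m\<close> by simp
    also have "\<dots> = 0\<^sub>v k" using L by (auto intro!: eq_vecI)
    finally show ?thesis .
  qed
  ultimately show thesis using that k B image intertwine by blast
qed

lemma intertwiner_fixed_vectors:
  assumes \<sigma>: "is_rep G m \<sigma>" and \<tau>: "is_rep G k \<tau>" and B: "B \<in> carrier_mat m k"
    and intertwine: "\<And>g. g \<in> carrier G \<Longrightarrow> \<sigma> g * B = B * \<tau> g"
    and v: "v \<in> fixed_vectors G k \<tau>"
  shows "B *\<^sub>v v \<in> fixed_vectors G m \<sigma>"
proof -
  have vC: "v \<in> carrier_vec k" using v by (simp add: fixed_vectors_def)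
  have "\<sigma> g *\<^sub>v (B *\<^sub>v v) = B *\<^sub>v v" if g: "g \<in> carrier G" for g
  proof -
    have "\<sigma> g *\<^sub>v (B *\<^sub>v v) = (\<sigma> g * B) *\<^sub>v v"
      using rep_carrier[OF \<sigma> g] B vC by (simp add: assoc_mult_mat_vec)
    also have "\<dots> = B *\<^sub>v (\<tau> g *\<^sub>v v)"
      using intertwine[OF g] rep_carrier[OF \<tau> g] B vC by (simp add: assoc_mult_mat_vec)
    also have "\<dots> = B *\<^sub>v v" using v g by (simp add: fixed_vectors_def)
    finally show ?thesis .
  qed
  then show ?thesis using B vC by (simp add: fixed_vectors_def)
qed

lemma irr_constituent_without_fixed_vectors:
  assumes "group G" and "is_rep G k \<tau>" and "0 < k" and "fixed_vectors G k \<tau> \<subseteq> {0\<^sub>v k}"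
  shows "\<exists>m (\<sigma> :: 'a \<Rightarrow> complex mat). is_irr_rep G m \<sigma> \<and> \<not> principal_character G m \<sigma> \<and> m \<le> k"
  using assms(2-)
proof (induction k arbitrary: \<tau> rule: less_induct)
  case (less k)
  show ?case
  proof (cases "is_irr_rep G k \<tau>")
    case True
    then show ?thesis using not_principal_if_no_fixed_vectors[OF assms(1) less.prems] by blast
  next
    case False
    then obtain W where W: "invariant_subspace G k \<tau> W" "W \<noteq> {0\<^sub>v k}" "W \<noteq> carrier_vec k"
      using less.prems unfolding is_irr_rep_def by blast
    obtain k' \<tau>' B where k': "0 < k'" "k' < k" and rep': "is_rep G k' \<tau>'"
      and B: "B \<in> carrier_mat k k'" and "(\<lambda>x. B *\<^sub>v x) ` carrier_vec k' \<subseteq> W"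
      and inj: "\<And>x. x \<in> carrier_vec k' \<Longrightarrow> B *\<^sub>v x = 0\<^sub>v k \<Longrightarrow> x = 0\<^sub>v k'"
      and intertwine: "\<And>g. g \<in> carrier G \<Longrightarrow> \<tau> g * B = B * \<tau>' g"
      by (rule invariant_subspace_subrep[OF less.prems(1) W]) (rule that)
    have "fixed_vectors G k' \<tau>' \<subseteq> {0\<^sub>v k'}"
    proof
      fix v assume v: "v \<in> fixed_vectors G k' \<tau>'"
      then have "B *\<^sub>v v \<in> fixed_vectors G k \<tau>"
        using intertwiner_fixed_vectors[OF less.prems(1) rep' B] intertwine by blast
      then have "B *\<^sub>v v = 0\<^sub>v k" using less.prems(3) by blast
      then show "v \<in> {0\<^sub>v k'}" using inj v by (simp add: fixed_vectors_def)
    qed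
    then show ?thesis using less.IH[OF k'(2) rep' k'(1)] k'(2) by fastforce
  qed
qed

section \<open>Representations of perfect groups\<close>

lemma perfect_group_rep_degree_one:
  fixes G (structure)
  assumes "group G" and perfect: "perfect_group G" and rep: "is_rep G 1 \<rho>" and g: "g \<in> carrier G"
  shows "\<rho> g = 1\<^sub>m 1"
proof -
  interpret group G by fact
  define f where "f h = \<rho> h $$ (0, 0)" for h
  have f_mult: "f (a \<otimes> b) = f a * f b" if "a \<in> carrier G" "b \<in> carrier G" for a b
    using rep_mult[OF rep that] rep_carrier[OF rep that(1)] rep_carrier[OF rep that(2)]
    by (simp add: f_def scalar_prod_def)
  have f_inv: "f (inv a) * f a = 1" if "a \<in> carrier G" for a
    using f_mult[of "inv a" a] rep_one[OF rep] that by (simp add: f_def)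
  have f_one: "\<rho> h = 1\<^sub>m 1 \<longleftrightarrow> f h = 1" if "h \<in> carrier G" for h
    using rep_carrier[OF rep that] by (auto simp: f_def intro!: eq_matI)
  define K where "K = {h \<in> carrier G. f h = 1}"
  have "subgroup K G"
  proof (rule subgroupI)
    show "K \<noteq> {}" using f_one rep_one[OF rep] by (auto simp: K_def)
    show "inv a \<in> K" if "a \<in> K" for a using f_inv[of a] that by (simp add: K_def)
    show "a \<otimes> b \<in> K" if "a \<in> K" "b \<in> K" for a b using f_mult that by (auto simp: K_def)
  qed (auto simp: K_def)
  moreover have "derived_set G (carrier G) \<subseteq> K"
  proof
    fix x assume "x \<in> derived_set G (carrier G)"
    then obtain a b where ab: "a \<in> carrier G" "b \<in> carrier G" and x: "x = a \<otimes> b \<otimes> inv a \<otimes> inv b"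
      by auto
    have "f x = (f (inv a) * f a) * (f (inv b) * f b)" using ab x f_mult by (simp add: ac_simps)
    then show "x \<in> K" using f_inv ab x by (simp add: K_def)
  qed
  ultimately have "derived G (carrier G) \<subseteq> K"
    unfolding derived_def by (rule generate_subgroup_incl[rotated])
  then show ?thesis using perfect g f_one by (auto simp: perfect_group_def K_def)
qed

lemma perfect_group_nonprincipal_irr_rep_degree:
  assumes "group G" and "perfect_group G" and "is_irr_rep G n \<rho>" and "\<not> principal_character G n \<rho>"
  shows "2 \<le> n"
proof (rule ccontr)
  assume "\<not> 2 \<le> n"
  then have "n = 1" using assms(3) by (simp add: is_irr_rep_def)
  then have "\<rho> g = 1\<^sub>m 1" if "g \<in> carrier G" for g
    using perfect_group_rep_degree_one[OF assms(1,2)] assms(3) that by (simp add: is_irr_rep_def)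
  then have "principal_character G n \<rho>"
    by (simp add: principal_character_def rep_character_def \<open>n = 1\<close>)
  then show False using assms(4) by contradiction
qed

section \<open>The adjoint representation on traceless matrices\<close>

lemma sum_lessThan_square:
  fixes n :: nat shows "(\<Sum>q<n * n. g q) = (\<Sum>k<n. \<Sum>l<n. g (k * n + l))"
proof -
  have "(\<Sum>q\<in>{k * n..<k * n + n}. g q) = (\<Sum>l<n. g (k * n + l))" for k
    using sum.shift_bounds_nat_ivl[of g 0 "k * n" n] by (simp add: atLeast0LessThan add.commute)
  then show ?thesis using sum.nat_group[of g n n] by simp
qed

lemma square_index_less: "i < n \<Longrightarrow> j < n \<Longrightarrow> i * n + j < n * (n :: nat)"
  using mult_le_mono1[of "Suc i" n n] by simp

lemma square_index_div_mod_less: "p < n * (n :: nat) \<Longrightarrow> p div n < n \<and> p mod n < n"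
  by (metis less_mult_imp_div_less mod_less_divisor mult_0_right neq0_conv not_less0)

definition vec_of_mat :: "nat \<Rightarrow> 'a mat \<Rightarrow> 'a vec"
  where "vec_of_mat n M = vec (n * n) (\<lambda>p. M $$ (p div n, p mod n))"

definition mat_of_vec :: "nat \<Rightarrow> 'a vec \<Rightarrow> 'a mat"
  where "mat_of_vec n v = mat n n (\<lambda>(i, j). v $ (i * n + j))"

definition sandwich_mat :: "nat \<Rightarrow> 'a :: semiring_0 mat \<Rightarrow> 'a mat \<Rightarrow> 'a mat"
  where "sandwich_mat n A C =
    mat (n * n) (n * n) (\<lambda>(p, q). A $$ (p div n, q div n) * C $$ (q mod n, p mod n))"

lemma vec_of_mat_carrier [simp]: "vec_of_mat n M \<in> carrier_vec (n * n)"
  by (simp add: vec_of_mat_def)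

lemma mat_of_vec_carrier [simp]: "mat_of_vec n v \<in> carrier_mat n n"
  by (simp add: mat_of_vec_def)

lemma sandwich_mat_carrier [simp]: "sandwich_mat n A C \<in> carrier_mat (n * n) (n * n)"
  by (simp add: sandwich_mat_def)

lemma mat_of_vec_of_mat [simp]: "M \<in> carrier_mat n n \<Longrightarrow> mat_of_vec n (vec_of_mat n M) = M"
  by (auto simp: mat_of_vec_def vec_of_mat_def square_index_less intro!: eq_matI)

lemma vec_of_mat_of_vec [simp]: "v \<in> carrier_vec (n * n) \<Longrightarrow> vec_of_mat n (mat_of_vec n v) = v"
  by (auto simp: mat_of_vec_def vec_of_mat_def square_index_div_mod_less intro!: eq_vecI)

lemma sandwich_mat_mult_vec_of_mat:
  fixes A C M :: "'a :: comm_semiring_0 mat"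
  assumes A: "A \<in> carrier_mat n n" and C: "C \<in> carrier_mat n n" and M: "M \<in> carrier_mat n n"
  shows "sandwich_mat n A C *\<^sub>v vec_of_mat n M = vec_of_mat n (A * M * C)"
proof (rule eq_vecI)
  fix p assume "p < dim_vec (vec_of_mat n (A * M * C))"
  then have p: "p < n * n" by (simp add: vec_of_mat_def)
  define i j where "i = p div n" and "j = p mod n"
  have ij: "i < n" "j < n" using square_index_div_mod_less[OF p] by (auto simp: i_def j_def)
  have "(sandwich_mat n A C *\<^sub>v vec_of_mat n M) $ p
      = (\<Sum>q<n * n. A $$ (i, q div n) * C $$ (q mod n, j) * M $$ (q div n, q mod n))"
    using p by (auto simp: sandwich_mat_def vec_of_mat_def scalar_prod_def i_def j_def
      lessThan_atLeast0 intro!: sum.cong)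
  also have "\<dots> = (\<Sum>k<n. \<Sum>l<n. A $$ (i, k) * C $$ (l, j) * M $$ (k, l))"
    unfolding sum_lessThan_square by (intro sum.cong refl) simp
  also have "\<dots> = (\<Sum>l<n. (\<Sum>k<n. A $$ (i, k) * M $$ (k, l)) * C $$ (l, j))"
    by (subst sum.swap) (simp add: sum_distrib_left sum_distrib_right ac_simps)
  also have "\<dots> = (A * M * C) $$ (i, j)"
    using A C M ij
    by (auto simp: scalar_prod_def lessThan_atLeast0 simp del: assoc_mult_mat intro!: sum.cong)
  also have "\<dots> = vec_of_mat n (A * M * C) $ p"
    using p by (simp add: vec_of_mat_def i_def j_def)
  finally show "(sandwich_mat n A C *\<^sub>v vec_of_mat n M) $ p = vec_of_mat n (A * M * C) $ p" .
qed (simp add: vec_of_mat_def sandwich_mat_def)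

definition mat_trace :: "nat \<Rightarrow> 'a :: comm_semiring_0 mat \<Rightarrow> 'a"
  where "mat_trace n M = (\<Sum>i<n. M $$ (i, i))"

lemma mat_trace_mult_comm:
  assumes A: "A \<in> carrier_mat n n" and B: "B \<in> carrier_mat n n"
  shows "mat_trace n (A * B) = mat_trace n (B * A)"
proof -
  have "mat_trace n (A * B) = (\<Sum>i<n. \<Sum>j<n. A $$ (i, j) * B $$ (j, i))"
    using A B by (auto simp: mat_trace_def scalar_prod_def lessThan_atLeast0 intro!: sum.cong)
  also have "\<dots> = (\<Sum>j<n. \<Sum>i<n. B $$ (j, i) * A $$ (i, j))"
    by (subst sum.swap) (simp add: mult.commute)
  also have "\<dots> = mat_trace n (B * A)"
    using A B by (auto simp: mat_trace_def scalar_prod_def lessThan_atLeast0 intro!: sum.cong)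
  finally show ?thesis .
qed

lemma mat_trace_mat_of_vec: "mat_trace n (mat_of_vec n v) = (\<Sum>i<n. v $ (i * n + i))"
  by (simp add: mat_trace_def mat_of_vec_def)

lemma eq_mat_on_vec_of_matI:
  fixes A C :: "'a :: comm_ring_1 mat"
  assumes "A \<in> carrier_mat m (n * n)" and "C \<in> carrier_mat m (n * n)"
    and "\<And>M. M \<in> carrier_mat n n \<Longrightarrow> A *\<^sub>v vec_of_mat n M = C *\<^sub>v vec_of_mat n M"
  shows "A = C"
  using assms(1,2) by (rule eq_mat_on_vecI) (metis assms(3) mat_of_vec_carrier vec_of_mat_of_vec)

definition adjoint_rep :: "('a, 'm) monoid_scheme \<Rightarrow> nat \<Rightarrow> ('a \<Rightarrow> complex mat) \<Rightarrow> 'a \<Rightarrow> complex mat"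
  where "adjoint_rep G n \<rho> g = sandwich_mat n (\<rho> g) (\<rho> (inv\<^bsub>G\<^esub> g))"

lemma (in group) adjoint_rep_vec_of_mat:
  assumes "is_rep G n \<rho>" and "g \<in> carrier G" and "M \<in> carrier_mat n n"
  shows "adjoint_rep G n \<rho> g *\<^sub>v vec_of_mat n M = vec_of_mat n (\<rho> g * M * \<rho> (inv g))"
  unfolding adjoint_rep_def
  using assms by (intro sandwich_mat_mult_vec_of_mat) (auto intro: rep_carrier)

lemma (in group) is_rep_adjoint_rep:
  assumes rep: "is_rep G n \<rho>"
  shows "is_rep G (n * n) (adjoint_rep G n \<rho>)"
  unfolding is_rep_def
proof (intro conjI ballI)
  fix g h assume g: "g \<in> carrier G" and h: "h \<in> carrier G"
  show "adjoint_rep G n \<rho> (g \<otimes> h) = adjoint_rep G n \<rho> g * adjoint_rep G n \<rho> h"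
  proof (rule eq_mat_on_vec_of_matI[where m = "n * n"])
    fix M :: "complex mat" assume M: "M \<in> carrier_mat n n"
    have carriers: "\<rho> g \<in> carrier_mat n n" "\<rho> h \<in> carrier_mat n n"
      "\<rho> (inv g) \<in> carrier_mat n n" "\<rho> (inv h) \<in> carrier_mat n n"
      using g h by (auto intro: rep_carrier[OF rep])
    have "\<rho> (inv (g \<otimes> h)) = \<rho> (inv h) * \<rho> (inv g)"
      using g h by (simp add: inv_mult_group rep_mult[OF rep])
    then have "adjoint_rep G n \<rho> (g \<otimes> h) *\<^sub>v vec_of_mat n M
        = vec_of_mat n (\<rho> g * (\<rho> h * M * \<rho> (inv h)) * \<rho> (inv g))"
      using carriers g h M
      by (simp add: adjoint_rep_vec_of_mat[OF rep] rep_mult[OF rep] assoc_mult_mat[of _ n n _ n _ n]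
          mult_carrier_mat[of _ n n _ n])
    also have "\<dots> = adjoint_rep G n \<rho> g *\<^sub>v (adjoint_rep G n \<rho> h *\<^sub>v vec_of_mat n M)"
      using carriers g h M by (simp add: adjoint_rep_vec_of_mat[OF rep])
    finally show "adjoint_rep G n \<rho> (g \<otimes> h) *\<^sub>v vec_of_mat n M
        = (adjoint_rep G n \<rho> g * adjoint_rep G n \<rho> h) *\<^sub>v vec_of_mat n M"
      by (simp add: adjoint_rep_def
          assoc_mult_mat_vec[OF sandwich_mat_carrier sandwich_mat_carrier vec_of_mat_carrier])
  qed (simp_all add: adjoint_rep_def mult_carrier_mat[OF sandwich_mat_carrier sandwich_mat_carrier])
next
  show "adjoint_rep G n \<rho> \<one> = 1\<^sub>m (n * n)"
  proof (rule eq_mat_on_vec_of_matI[where m = "n * n"])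
    fix M :: "complex mat" assume "M \<in> carrier_mat n n"
    then show "adjoint_rep G n \<rho> \<one> *\<^sub>v vec_of_mat n M = 1\<^sub>m (n * n) *\<^sub>v vec_of_mat n M"
      by (simp add: adjoint_rep_vec_of_mat[OF rep] rep_one[OF rep])
  qed (simp_all add: adjoint_rep_def)
qed (simp add: adjoint_rep_def)

lemma (in group) adjoint_rep_central:
  assumes irr: "is_irr_rep G n \<rho>" and z: "z \<in> group_center G"
  shows "adjoint_rep G n \<rho> z = 1\<^sub>m (n * n)"
proof -
  have rep: "is_rep G n \<rho>" using irr by (simp add: is_irr_rep_def)
  have zG: "z \<in> carrier G" and central: "\<And>g. g \<in> carrier G \<Longrightarrow> z \<otimes> g = g \<otimes> z"
    using z by (auto simp: group_center_def)
  obtain c where c: "\<rho> z = c \<cdot>\<^sub>m 1\<^sub>m n"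
  proof (rule irr_rep_commuting_mat_scalar[OF irr rep_carrier[OF rep zG]])
    fix g assume "g \<in> carrier G"
    then show "\<rho> z * \<rho> g = \<rho> g * \<rho> z" using central rep_mult[OF rep] zG by metis
  qed
  show ?thesis
  proof (rule eq_mat_on_vec_of_matI[where m = "n * n"])
    fix M :: "complex mat" assume M: "M \<in> carrier_mat n n"
    have zC: "\<rho> z \<in> carrier_mat n n" and izC: "\<rho> (inv z) \<in> carrier_mat n n"
      using zG by (auto intro: rep_carrier[OF rep])
    have "\<rho> z * M = M * \<rho> z"
      using mult_smult_assoc_mat[OF one_carrier_mat M, of c]
        mult_smult_distrib[OF M one_carrier_mat, of c] M by (simp add: c)
    then have "\<rho> z * M * \<rho> (inv z) = M * (\<rho> z * \<rho> (inv z))"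
      using M zC izC by simp
    also have "\<dots> = M" using M rep_mult_inv[OF rep zG] by simp
    finally show "adjoint_rep G n \<rho> z *\<^sub>v vec_of_mat n M = 1\<^sub>m (n * n) *\<^sub>v vec_of_mat n M"
      using M zG by (simp add: adjoint_rep_vec_of_mat[OF rep])
  qed (simp_all add: adjoint_rep_def)
qed

definition traceless_vecs :: "nat \<Rightarrow> 'a :: comm_semiring_0 vec set"
  where "traceless_vecs n = {v \<in> carrier_vec (n * n). mat_trace n (mat_of_vec n v) = 0}"

lemma (in group) traceless_vecs_invariant:
  assumes rep: "is_rep G n \<rho>"
  shows "invariant_subspace G (n * n) (adjoint_rep G n \<rho>) (traceless_vecs n)"
  unfolding invariant_subspace_def
proof (intro conjI ballI allI)
  fix v w :: "complex vec" assume v: "v \<in> traceless_vecs n" and w: "w \<in> traceless_vecs n"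
  have "(\<Sum>i<n. (v + w) $ (i * n + i)) = (\<Sum>i<n. v $ (i * n + i)) + (\<Sum>i<n. w $ (i * n + i))"
    using v w by (auto simp: traceless_vecs_def square_index_less sum.distrib intro!: sum.cong)
  with v w show "v + w \<in> traceless_vecs n"
    by (simp add: traceless_vecs_def mat_trace_mat_of_vec)
next
  fix c and v :: "complex vec" assume "v \<in> traceless_vecs n"
  then show "c \<cdot>\<^sub>v v \<in> traceless_vecs n"
    by (auto simp: traceless_vecs_def mat_trace_mat_of_vec square_index_less
        sum_distrib_left[symmetric])
next
  fix g and v :: "complex vec" assume g: "g \<in> carrier G" and v: "v \<in> traceless_vecs n"
  define M where "M = mat_of_vec n v"
  have M: "M \<in> carrier_mat n n" and vM: "v = vec_of_mat n M" and trM: "mat_trace n M = 0"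
    using v by (auto simp: M_def traceless_vecs_def)
  have gC: "\<rho> g \<in> carrier_mat n n" and igC: "\<rho> (inv g) \<in> carrier_mat n n"
    using g by (auto intro: rep_carrier[OF rep])
  have "mat_trace n (\<rho> g * M * \<rho> (inv g)) = mat_trace n (\<rho> (inv g) * (\<rho> g * M))"
    using M gC igC by (intro mat_trace_mult_comm) auto
  also have "\<dots> = 0"
    using M gC igC trM rep_inv_mult[OF rep g]
    by (simp add: assoc_mult_mat[symmetric, of _ n n _ n _ n])
  finally show "adjoint_rep G n \<rho> g *\<^sub>v v \<in> traceless_vecs n"
    using M g gC igC by (simp add: vM adjoint_rep_vec_of_mat[OF rep] traceless_vecs_def)
qed (auto simp: traceless_vecs_def mat_trace_mat_of_vec square_index_less)

lemma traceless_vecs_proper: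
  assumes "2 \<le> n"
  shows "traceless_vecs n \<noteq> {0\<^sub>v (n * n) :: complex vec}"
    and "traceless_vecs n \<noteq> (carrier_vec (n * n) :: complex vec set)"
proof -
  have N: "1 < n * n" using assms mult_le_mono[OF assms assms] by simp
  have "i * n + i \<noteq> 1" if "i < n" for i
    using assms by (cases i) auto
  then have "unit_vec (n * n) 1 \<in> (traceless_vecs n :: complex vec set)"
    using N
    by (auto simp: traceless_vecs_def mat_trace_mat_of_vec square_index_less intro!: sum.neutral)
  moreover have "unit_vec (n * n) 1 $ 1 \<noteq> (0\<^sub>v (n * n) :: complex vec) $ 1" using N by simp
  ultimately show "traceless_vecs n \<noteq> {0\<^sub>v (n * n) :: complex vec}" by (metis singletonD)
  have "(\<Sum>i<n. (unit_vec (n * n) 0 :: complex vec) $ (i * n + i)) = (\<Sum>i<n. if i = 0 then 1 else 0)"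
    using assms by (intro sum.cong) (auto simp: square_index_less)
  also have "\<dots> = 1" using assms by (simp add: sum.delta)
  finally have "unit_vec (n * n) 0 \<notin> (traceless_vecs n :: complex vec set)"
    by (simp add: traceless_vecs_def mat_trace_mat_of_vec)
  then show "traceless_vecs n \<noteq> (carrier_vec (n * n) :: complex vec set)" using N by auto
qed

lemma (in group) adjoint_rep_fixed_traceless:
  assumes irr: "is_irr_rep G n \<rho>"
  shows "fixed_vectors G (n * n) (adjoint_rep G n \<rho>) \<inter> traceless_vecs n \<subseteq> {0\<^sub>v (n * n)}"
proof
  fix v assume v: "v \<in> fixed_vectors G (n * n) (adjoint_rep G n \<rho>) \<inter> traceless_vecs n"
  have rep: "is_rep G n \<rho>" and "0 < n" using irr by (auto simp: is_irr_rep_def)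
  define M where "M = mat_of_vec n v"
  have M: "M \<in> carrier_mat n n" and vM: "v = vec_of_mat n M" and trM: "mat_trace n M = 0"
    using v by (auto simp: M_def traceless_vecs_def fixed_vectors_def)
  have "M * \<rho> g = \<rho> g * M" if g: "g \<in> carrier G" for g
  proof -
    have gC: "\<rho> g \<in> carrier_mat n n" and igC: "\<rho> (inv g) \<in> carrier_mat n n"
      using g by (auto intro: rep_carrier[OF rep])
    have "vec_of_mat n (\<rho> g * M * \<rho> (inv g)) = vec_of_mat n M"
      using v g M by (simp add: vM fixed_vectors_def adjoint_rep_vec_of_mat[OF rep])
    then have "\<rho> g * M * \<rho> (inv g) = M"
      using mat_of_vec_of_mat[of "\<rho> g * M * \<rho> (inv g)" n] M gC igC by simp
    then have "M * \<rho> g = \<rho> g * M * \<rho> (inv g) * \<rho> g" by (simp only:)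
    also have "\<dots> = \<rho> g * M * (\<rho> (inv g) * \<rho> g)"
      using assoc_mult_mat[OF mult_carrier_mat[OF gC M] igC gC] .
    finally show ?thesis using M gC rep_inv_mult[OF rep g] by simp
  qed
  then obtain c where c: "M = c \<cdot>\<^sub>m 1\<^sub>m n" using irr_rep_commuting_mat_scalar[OF irr M] by blast
  then have "c * of_nat n = 0" using trM by (auto simp: mat_trace_def)
  then have "M = 0\<^sub>m n n" using c \<open>0 < n\<close> by (auto intro!: eq_matI)
  then show "v \<in> {0\<^sub>v (n * n)}"
    by (simp add: vM vec_of_mat_def square_index_div_mod_less vec_eq_iff)
qed

section \<open>Perfect central extensions\<close>

lemma rep_through_surjective_hom:
  assumes hom: "group_hom G H \<pi>" and surj: "\<pi> ` carrier G = carrier H" and rep: "is_rep G N \<Phi>"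
    and ker: "\<And>z. z \<in> kernel G H \<pi> \<Longrightarrow> \<Phi> z = 1\<^sub>m N"
  obtains \<sigma> where "is_rep H N \<sigma>" and "\<And>g. g \<in> carrier G \<Longrightarrow> \<sigma> (\<pi> g) = \<Phi> g"
proof -
  interpret group_hom G H \<pi> by fact
  have fibre: "\<Phi> b = \<Phi> a"
    if a: "a \<in> carrier G" and b: "b \<in> carrier G" and ab: "\<pi> a = \<pi> b" for a b
  proof -
    define z where "z = inv\<^bsub>G\<^esub> a \<otimes>\<^bsub>G\<^esub> b"
    have z: "z \<in> kernel G H \<pi>" using a b ab by (simp add: z_def kernel_def hom_inv)
    then have "b = a \<otimes>\<^bsub>G\<^esub> z"
      using G.inv_solve_left[of z a b] a b by (simp add: z_def kernel_def)
    then show ?thesis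
      using rep_mult[OF rep a] ker[OF z] rep_carrier[OF rep a] z by (simp add: kernel_def)
  qed
  define \<sigma> where "\<sigma> s = \<Phi> (SOME g. g \<in> carrier G \<and> \<pi> g = s)" for s
  have \<sigma>\<pi>: "\<sigma> (\<pi> g) = \<Phi> g" if g: "g \<in> carrier G" for g
  proof -
    have "\<exists>g'. g' \<in> carrier G \<and> \<pi> g' = \<pi> g" using g by blast
    then have "(SOME g'. g' \<in> carrier G \<and> \<pi> g' = \<pi> g) \<in> carrier G \<and>
        \<pi> (SOME g'. g' \<in> carrier G \<and> \<pi> g' = \<pi> g) = \<pi> g"
      by (rule someI_ex)
    then show ?thesis unfolding \<sigma>_def using fibre[OF g] by metis
  qed
  have "is_rep H N \<sigma>"
    unfolding is_rep_def
  proof (intro conjI ballI)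
    fix s t assume "s \<in> carrier H" "t \<in> carrier H"
    then obtain a b where "a \<in> carrier G" "b \<in> carrier G" "s = \<pi> a" "t = \<pi> b"
      using surj by (metis imageE)
    then show "\<sigma> (s \<otimes>\<^bsub>H\<^esub> t) = \<sigma> s * \<sigma> t"
      by (simp add: \<sigma>\<pi> rep_mult[OF rep] flip: hom_mult)
  next
    fix s assume "s \<in> carrier H"
    then obtain a where "a \<in> carrier G" "s = \<pi> a" using surj by (metis imageE)
    then show "\<sigma> s \<in> carrier_mat N N" by (simp add: \<sigma>\<pi> rep_carrier[OF rep])
  next
    show "\<sigma> \<one>\<^bsub>H\<^esub> = 1\<^sub>m N" using \<sigma>\<pi>[of "\<one>\<^bsub>G\<^esub>"] rep_one[OF rep] by simp
  qed
  then show thesis using that \<sigma>\<pi> by blast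
qed

lemma
  assumes surj: "\<pi> ` carrier G = carrier H" and \<sigma>\<pi>: "\<And>g. g \<in> carrier G \<Longrightarrow> \<sigma> (\<pi> g) = \<Phi> g"
  shows invariant_subspace_through_surjective:
      "invariant_subspace H N \<sigma> W \<longleftrightarrow> invariant_subspace G N \<Phi> W"
    and fixed_vectors_through_surjective: "fixed_vectors H N \<sigma> = fixed_vectors G N \<Phi>"
  unfolding invariant_subspace_def fixed_vectors_def surj[symmetric] using \<sigma>\<pi> by auto

theorem perfect_central_extension_nonprincipal_irr_rep:
  assumes ext: "central_extension E G \<pi>" and perfect: "perfect_group E"
    and irr: "is_irr_rep E n \<rho>" and nonprincipal: "\<not> principal_character E n \<rho>"
  shows "\<exists>m (\<sigma> :: 'a \<Rightarrow> complex mat).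
           is_irr_rep G m \<sigma> \<and> \<not> principal_character G m \<sigma> \<and> m \<le> n\<^sup>2 - 1"
proof -
  have E: "group E" and G: "group G" and hom: "group_hom E G \<pi>"
    and surj: "\<pi> ` carrier E = carrier G" and ker: "kernel E G \<pi> \<subseteq> group_center E"
    using ext by (auto simp: central_extension_def group_hom_def group_hom_axioms_def)
  interpret E: group E by (rule E)
  have rep: "is_rep E n \<rho>" using irr by (simp add: is_irr_rep_def)
  have "2 \<le> n" by (rule perfect_group_nonprincipal_irr_rep_degree[OF E perfect irr nonprincipal])
  obtain \<sigma> where \<sigma>: "is_rep G (n * n) \<sigma>"
    and \<sigma>\<pi>: "\<And>h. h \<in> carrier E \<Longrightarrow> \<sigma> (\<pi> h) = adjoint_rep E n \<rho> h"
    using rep_through_surjective_hom[OF hom surj E.is_rep_adjoint_rep[OF rep]]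
      E.adjoint_rep_central[OF irr] ker by blast
  have inv: "invariant_subspace G (n * n) \<sigma> (traceless_vecs n)"
    using invariant_subspace_through_surjective[where \<Phi> = "adjoint_rep E n \<rho>", OF surj \<sigma>\<pi>]
      E.traceless_vecs_invariant[OF rep] by simp
  obtain k \<tau> B where k: "0 < k" "k < n * n" and \<tau>: "is_rep G k \<tau>"
    and B: "B \<in> carrier_mat (n * n) k"
    and B_traceless: "(\<lambda>x. B *\<^sub>v x) ` carrier_vec k \<subseteq> traceless_vecs n"
    and B_inj: "\<And>x. x \<in> carrier_vec k \<Longrightarrow> B *\<^sub>v x = 0\<^sub>v (n * n) \<Longrightarrow> x = 0\<^sub>v k"
    and intertwine: "\<And>g. g \<in> carrier G \<Longrightarrow> \<sigma> g * B = B * \<tau> g"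
    by (rule invariant_subspace_subrep[OF \<sigma> inv traceless_vecs_proper[OF \<open>2 \<le> n\<close>]])
      (rule that)
  have "fixed_vectors G k \<tau> \<subseteq> {0\<^sub>v k}"
  proof
    fix v assume v: "v \<in> fixed_vectors G k \<tau>"
    have "B *\<^sub>v v \<in> fixed_vectors G (n * n) \<sigma>"
      using intertwiner_fixed_vectors[OF \<sigma> \<tau> B] intertwine v by blast
    moreover have "B *\<^sub>v v \<in> traceless_vecs n" using B_traceless v by (auto simp: fixed_vectors_def)
    ultimately have "B *\<^sub>v v \<in> fixed_vectors E (n * n) (adjoint_rep E n \<rho>) \<inter> traceless_vecs n"
      using fixed_vectors_through_surjective[where \<Phi> = "adjoint_rep E n \<rho>", OF surj \<sigma>\<pi>] by simp
    then have "B *\<^sub>v v = 0\<^sub>v (n * n)" using E.adjoint_rep_fixed_traceless[OF irr] by blast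
    then show "v \<in> {0\<^sub>v k}" using B_inj v by (simp add: fixed_vectors_def)
  qed
  then show ?thesis
    using irr_constituent_without_fixed_vectors[OF G \<tau> k(1)] k(2)
    by (fastforce simp: power2_eq_square)
qed

theorem proposition3p1:
  fixes S :: "'a monoid" and Sh :: "'b monoid" and \<pi> :: "'b \<Rightarrow> 'a"
    and n :: nat and \<rho> :: "'b \<Rightarrow> complex mat"
  assumes "simple_group S" and "\<not> comm_group S"
    and "schur_cover Sh S \<pi>"
    and "is_irr_rep Sh n \<rho>" and "\<not> principal_character Sh n \<rho>"
  shows "\<exists>m (\<sigma> :: 'a \<Rightarrow> complex mat). is_irr_rep S m \<sigma> \<and> \<not> principal_character S m \<sigma> \<and>
           m \<le> n ^ 2 - 1"
proof -
  have "central_extension Sh S \<pi>" and "perfect_group Sh"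
    using assms(3) by (simp_all add: schur_cover_def)
  then show ?thesis
    using perfect_central_extension_nonprincipal_irr_rep assms(4,5) by blast
qed

end
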